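(* Let $F$ be a field of characteristic $p>0$, let $S_1,\ldots,S_r\subset F$ be nonempty with $\mathrm{pdeg}(S_i)=k_i\in\mathbb N$, and for each $i$ let $\{a_{i1},\ldots,a_{ik_i}\}$ be a $p$-basis of $F^p(S_i)$. Then $$\operatorname{ann}\Omega^n_F(\mathrm{d} S_1\wedge\cdots\wedge\mathrm{d} S_r)=\operatorname{ann}\Omega^n_F(\mathrm{d}\{a_{11},\ldots,a_{1k_1}\}\wedge\cdots\wedge\mathrm{d}\{a_{r1},\ldots,a_{rk_r}\}),$$ and in particular $$\operatorname{ann}\Omega^n_F(\mathrm{d} S_1\wedge\cdots\wedge\mathrm{d} S_r)=\bigcap_{j_1=1}^{k_1}\cdots\bigcap_{j_r=1}^{k_r}\operatorname{ann}\Omega^n_F(\mathrm{d} a_{1j_1}\wedge\cdots\wedge\mathrm{d} a_{rj_r}).$$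
   Context: $F$ is a field of characteristic $p>0$. $\Omega^1(F)$ is the $F$-vector space generated by symbols $\mathrm{d} a$ ($a\in F$) with $\mathrm{d}(a+b)=\mathrm{d} a+\mathrm{d} b$, $\mathrm{d}(ab)=a\,\mathrm{d} b+b\,\mathrm{d} a$; $\Omega^n(F)=\bigwedge^n_F\Omega^1(F)$. A subset $A\subset F$ is $p$-independent if $[F^p(a_1,\ldots,a_m):F^p]=p^m$ for all finite $\{a_1,\ldots,a_m\}\subset A$; for $C\subset F$, $\mathrm{pdeg}(C)=\log_p[F^p(C):F^p]$; a $p$-basis of a field $L$ with $F^p\subseteq L\subseteq F$ is a $p$-independent $A\subset L$ with $F^p(A)=L$. For nonempty $S_1,\ldots,S_k\subset F$, $\mathrm{d} S_1\wedge\cdots\wedge\mathrm{d} S_k=\{\mathrm{d} s_1\wedge\cdots\wedge\mathrm{d} s_k\mid s_i\in S_i\}\subset\Omega^k(F)$; a single form in place of a set means the singleton. For nonempty $U\subset\Omega^k(F)$, $\operatorname{ann}\Omega^n_F(U)=\{\omega\in\Omega^n(F)\mid\omega\wedge u=0\text{ for all }u\in U\}$. *)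

theory Defs
  imports Main
begin

definition is_subfield :: "'a::field set \<Rightarrow> bool" where
  "is_subfield K \<longleftrightarrow> 0 \<in> K \<and> 1 \<in> K \<and>
     (\<forall>x\<in>K. \<forall>y\<in>K. x + y \<in> K \<and> x - y \<in> K \<and> x * y \<in> K) \<and>
     (\<forall>x\<in>K. inverse x \<in> K)"

definition gen_subfield :: "'a::field set \<Rightarrow> 'a set" where
  "gen_subfield X = \<Inter>{K. is_subfield K \<and> X \<subseteq> K}"

definition Fp :: "'a::field set" where
  "Fp = {x ^ CHAR('a) | x. True}"

definition Fp_adj :: "'a::field set \<Rightarrow> 'a set" where
  "Fp_adj C = gen_subfield (Fp \<union> C)"

definition ext_degree_is :: "'a::field set \<Rightarrow> 'a set \<Rightarrow> nat \<Rightarrow> bool" where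
  "ext_degree_is K L d \<longleftrightarrow> (\<exists>B. finite B \<and> card B = d \<and> B \<subseteq> L \<and>
      (\<forall>c. (\<forall>b\<in>B. c b \<in> K) \<longrightarrow> (\<Sum>b\<in>B. c b * b) = 0 \<longrightarrow> (\<forall>b\<in>B. c b = 0)) \<and>
      L = {(\<Sum>b\<in>B. c b * b) | c. \<forall>b\<in>B. c b \<in> K})"

definition pdeg_is :: "'a::field set \<Rightarrow> nat \<Rightarrow> bool" where
  "pdeg_is C k \<longleftrightarrow> ext_degree_is Fp (Fp_adj C) (CHAR('a) ^ k)"

definition p_independent :: "'a::field set \<Rightarrow> bool" where
  "p_independent A \<longleftrightarrow> (\<forall>A0. finite A0 \<longrightarrow> A0 \<subseteq> A \<longrightarrow>
       ext_degree_is Fp (Fp_adj A0) (CHAR('a) ^ card A0))"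

definition p_basis_of :: "'a::field set \<Rightarrow> 'a set \<Rightarrow> bool" where
  "p_basis_of L A \<longleftrightarrow> A \<subseteq> L \<and> p_independent A \<and> Fp_adj A = L"

text \<open>A formal F-linear combination of symbols  d a_1 \<and> ... \<and> d a_m  is represented by a
  finitely supported function  'a list \<Rightarrow> 'a  (coefficient of the word [a_1,...,a_m]).
  The n-forms Omega^n(F) are the quotient of the formal combinations of words of length n
  by the subspace generated by the defining relations of Omega^1 in each slot
  (additivity, Leibniz rule) and the alternating relation. We work with representatives:
  a representative is zero in Omega^n(F) iff it lies in omega_rel.\<close>

definition word :: "'a list \<Rightarrow> ('a list \<Rightarrow> 'a::field)" where
  "word w = (\<lambda>l. if l = w then 1 else 0)"

inductive_set omega_rel :: "('a list \<Rightarrow> 'a::field) set" where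
  zero: "(\<lambda>_. 0) \<in> omega_rel"
| add: "f \<in> omega_rel \<Longrightarrow> g \<in> omega_rel \<Longrightarrow> (\<lambda>l. f l + g l) \<in> omega_rel"
| smult: "f \<in> omega_rel \<Longrightarrow> (\<lambda>l. c * f l) \<in> omega_rel"
| additive: "(\<lambda>l. word (xs @ [a + b] @ ys) l - word (xs @ [a] @ ys) l
                  - word (xs @ [b] @ ys) l) \<in> omega_rel"
| leibniz: "(\<lambda>l. word (xs @ [a * b] @ ys) l - a * word (xs @ [b] @ ys) l
                  - b * word (xs @ [a] @ ys) l) \<in> omega_rel"
| alternating: "word (xs @ [a] @ ys @ [a] @ zs) \<in> omega_rel"

definition omega_n :: "nat \<Rightarrow> ('a list \<Rightarrow> 'a::field) set" where
  "omega_n n = {f. finite {l. f l \<noteq> 0} \<and> (\<forall>l. f l \<noteq> 0 \<longrightarrow> length l = n)}"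

text \<open>omega \<and> d s_1 \<and> ... \<and> d s_k  for the word s = [s_1,...,s_k].\<close>
definition wedge_word :: "('a list \<Rightarrow> 'a::field) \<Rightarrow> 'a list \<Rightarrow> ('a list \<Rightarrow> 'a)" where
  "wedge_word f s = (\<lambda>l. if length s \<le> length l \<and> drop (length l - length s) l = s
                         then f (take (length l - length s) l) else 0)"

text \<open>dS_1 \<and> ... \<and> dS_r, as the set of words [s_1,...,s_r] with s_i \<in> S_i (indices 0..r-1).\<close>
definition dwedge :: "nat \<Rightarrow> (nat \<Rightarrow> 'a set) \<Rightarrow> 'a list set" where
  "dwedge r S = {l. length l = r \<and> (\<forall>i<r. l ! i \<in> S i)}"

definition ann :: "nat \<Rightarrow> 'a::field list set \<Rightarrow> ('a list \<Rightarrow> 'a) set" where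
  "ann n U = {f \<in> omega_n n. \<forall>u\<in>U. wedge_word f u \<in> omega_rel}"

end

theory Submission
  imports Defs
begin

text \<open>Only \<open>F\<^sup>p(S\<^sub>i) = F\<^sup>p(a\<^sub>i\<^sub>1, \<dots>, a\<^sub>i\<^sub>k\<^sub>i)\<close> is used. The elements \<open>x\<close> such that, in every slot of a
  wedge word, \<open>d x\<close> is congruent modulo the relations to an \<open>F\<close>-linear combination of
  differentials \<open>d t\<close> with \<open>t \<in> T\<close> (the set \<open>dspan T\<close>) form a subfield containing \<open>T\<close> and
  \<open>F\<^sup>p\<close>, since \<open>d(x\<^sup>p) = p x\<^sup>p\<^sup>-\<^sup>1 d x = 0\<close>; hence it contains \<open>F\<^sup>p(T)\<close>. Replacing the slots one at
  a time, a form killed by \<open>d U\<^sub>1 \<and> \<dots> \<and> d U\<^sub>r\<close> is then killed by \<open>d T\<^sub>1 \<and> \<dots> \<and> d T\<^sub>r\<close>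
  whenever \<open>T\<^sub>i \<subseteq> F\<^sup>p(U\<^sub>i)\<close>; applying this in both directions gives the equality of annihilators.\<close>

lemma omega_rel_lincomb:
  assumes "f \<in> omega_rel" "g \<in> omega_rel" "h \<in> omega_rel"
    and "\<And>l. e l = a * f l + b * g l + c * h l"
  shows "e \<in> omega_rel"
proof -
  have "e = (\<lambda>l. a * f l + b * g l + c * h l)"
    using assms(4) by (simp add: fun_eq_iff)
  then show ?thesis
    using assms(1-3) by (simp add: omega_rel.add omega_rel.smult)
qed

lemma omega_rel_sum:
  "finite P \<Longrightarrow> (\<And>x. x \<in> P \<Longrightarrow> G x \<in> omega_rel) \<Longrightarrow> (\<lambda>l. \<Sum>x\<in>P. G x l) \<in> omega_rel"
proof (induction P rule: finite_induct)
  case empty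
  then show ?case using omega_rel.zero by simp
next
  case (insert x P)
  then show ?case using omega_rel.add[of "G x" "\<lambda>l. \<Sum>x\<in>P. G x l"] by simp
qed

lemma omega_rel_sum_list:
  "(\<And>x. x \<in> set xs \<Longrightarrow> G x \<in> omega_rel) \<Longrightarrow> (\<lambda>l. \<Sum>x\<leftarrow>xs. G x l) \<in> omega_rel"
proof (induction xs)
  case Nil
  then show ?case using omega_rel.zero by simp
next
  case (Cons x xs)
  then show ?case using omega_rel.add[of "G x" "\<lambda>l. \<Sum>x\<leftarrow>xs. G x l"] by simp
qed

lemma word_slot_zero_rel: "word (xs @ 0 # ys) \<in> omega_rel"
  using omega_rel.smult[OF omega_rel.additive[of xs 0 0 ys], of "-1"] by (simp add: fun_eq_iff)

lemma word_slot_one_rel: "word (xs @ 1 # ys) \<in> omega_rel"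
  using omega_rel.smult[OF omega_rel.leibniz[of xs 1 1 ys], of "-1"] by (simp add: fun_eq_iff)

lemma word_slot_power_rel:
  "(\<lambda>l. word (xs @ [x ^ Suc n] @ ys) l - (of_nat (Suc n) * x ^ n) * word (xs @ [x] @ ys) l)
     \<in> omega_rel"
proof (induction n)
  case 0
  then show ?case using omega_rel.zero by simp
next
  case (Suc n)
  show ?case
    by (rule omega_rel_lincomb[where a=1 and b=x and c=0,
        OF omega_rel.leibniz[of xs x "x ^ Suc n" ys] Suc omega_rel.zero])
      (simp add: algebra_simps)
qed

text \<open>A list \<open>L\<close> of pairs \<open>(c, t)\<close> stands for the combination \<open>\<Sum> c d t\<close>, placed in the slot
  between \<open>xs\<close> and \<open>ys\<close>.\<close>

definition slot_comb :: "('a::field \<times> 'a) list \<Rightarrow> 'a list \<Rightarrow> 'a list \<Rightarrow> 'a list \<Rightarrow> 'a" where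
  "slot_comb L xs ys = (\<lambda>l. \<Sum>(c, t)\<leftarrow>L. c * word (xs @ [t] @ ys) l)"

definition scale_comb :: "'a::field \<Rightarrow> ('a \<times> 'a) list \<Rightarrow> ('a \<times> 'a) list" where
  "scale_comb d L = map (\<lambda>(c, t). (d * c, t)) L"

lemma slot_comb_append [simp]:
  "slot_comb (L @ M) xs ys l = slot_comb L xs ys l + slot_comb M xs ys l"
  by (simp add: slot_comb_def)

lemma slot_comb_scale_comb [simp]: "slot_comb (scale_comb d L) xs ys l = d * slot_comb L xs ys l"
  unfolding scale_comb_def by (induction L) (auto simp: slot_comb_def algebra_simps)

lemma snd_scale_comb [simp]: "snd ` set (scale_comb d L) = snd ` set L"
  unfolding scale_comb_def by (induction L) auto

definition dspan :: "'a::field set \<Rightarrow> 'a set" where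
  "dspan T = {x. \<exists>L. snd ` set L \<subseteq> T \<and>
     (\<forall>xs ys. (\<lambda>l. word (xs @ [x] @ ys) l - slot_comb L xs ys l) \<in> omega_rel)}"

lemma dspanI:
  assumes "snd ` set L \<subseteq> T"
    and "\<And>xs ys. (\<lambda>l. word (xs @ [x] @ ys) l - slot_comb L xs ys l) \<in> omega_rel"
  shows "x \<in> dspan T"
  using assms unfolding dspan_def by blast

lemma dspan_if_word_rel: "(\<And>xs ys. word (xs @ x # ys) \<in> omega_rel) \<Longrightarrow> x \<in> dspan T"
  by (rule dspanI[of "[]"]) (simp_all add: slot_comb_def)

lemma subset_dspan: "T \<subseteq> dspan T"
  by (auto intro!: dspanI[of "[(1, t)]" for t] simp: slot_comb_def omega_rel.zero)

lemma dspan_add: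
  assumes "x \<in> dspan T" "y \<in> dspan T"
  shows "x + y \<in> dspan T"
proof -
  obtain Lx where Lx: "snd ` set Lx \<subseteq> T"
    and dx: "\<And>xs ys. (\<lambda>l. word (xs @ [x] @ ys) l - slot_comb Lx xs ys l) \<in> omega_rel"
    using assms(1) unfolding dspan_def by blast
  obtain Ly where Ly: "snd ` set Ly \<subseteq> T"
    and dy: "\<And>xs ys. (\<lambda>l. word (xs @ [y] @ ys) l - slot_comb Ly xs ys l) \<in> omega_rel"
    using assms(2) unfolding dspan_def by blast
  show ?thesis
  proof (rule dspanI)
    show "snd ` set (Lx @ Ly) \<subseteq> T" using Lx Ly by (simp add: image_Un)
    fix xs ys
    show "(\<lambda>l. word (xs @ [x + y] @ ys) l - slot_comb (Lx @ Ly) xs ys l) \<in> omega_rel"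
      by (rule omega_rel_lincomb[where a=1 and b=1 and c=1,
            OF omega_rel.additive[of xs x y ys] dx[of xs ys] dy[of xs ys]])
        (simp add: algebra_simps)
  qed
qed

lemma dspan_diff:
  assumes "x \<in> dspan T" "y \<in> dspan T"
  shows "x - y \<in> dspan T"
proof -
  obtain Lx where Lx: "snd ` set Lx \<subseteq> T"
    and dx: "\<And>xs ys. (\<lambda>l. word (xs @ [x] @ ys) l - slot_comb Lx xs ys l) \<in> omega_rel"
    using assms(1) unfolding dspan_def by blast
  obtain Ly where Ly: "snd ` set Ly \<subseteq> T"
    and dy: "\<And>xs ys. (\<lambda>l. word (xs @ [y] @ ys) l - slot_comb Ly xs ys l) \<in> omega_rel"
    using assms(2) unfolding dspan_def by blast
  show ?thesis
  proof (rule dspanI)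
    show "snd ` set (Lx @ scale_comb (-1) Ly) \<subseteq> T" using Lx Ly by (simp add: image_Un)
    fix xs ys
    show "(\<lambda>l. word (xs @ [x - y] @ ys) l - slot_comb (Lx @ scale_comb (-1) Ly) xs ys l)
        \<in> omega_rel"
      by (rule omega_rel_lincomb[where a="-1" and b=1 and c="-1",
            OF omega_rel.additive[of xs "x - y" y ys] dx[of xs ys] dy[of xs ys]])
        (simp add: algebra_simps)
  qed
qed

lemma dspan_mult:
  assumes "x \<in> dspan T" "y \<in> dspan T"
  shows "x * y \<in> dspan T"
proof -
  obtain Lx where Lx: "snd ` set Lx \<subseteq> T"
    and dx: "\<And>xs ys. (\<lambda>l. word (xs @ [x] @ ys) l - slot_comb Lx xs ys l) \<in> omega_rel"
    using assms(1) unfolding dspan_def by blast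
  obtain Ly where Ly: "snd ` set Ly \<subseteq> T"
    and dy: "\<And>xs ys. (\<lambda>l. word (xs @ [y] @ ys) l - slot_comb Ly xs ys l) \<in> omega_rel"
    using assms(2) unfolding dspan_def by blast
  show ?thesis
  proof (rule dspanI)
    show "snd ` set (scale_comb y Lx @ scale_comb x Ly) \<subseteq> T" using Lx Ly by (simp add: image_Un)
    fix xs ys
    show "(\<lambda>l. word (xs @ [x * y] @ ys) l - slot_comb (scale_comb y Lx @ scale_comb x Ly) xs ys l)
        \<in> omega_rel"
      by (rule omega_rel_lincomb[where a=1 and b=y and c=x,
            OF omega_rel.leibniz[of xs x y ys] dx[of xs ys] dy[of xs ys]])
        (simp add: algebra_simps)
  qed
qed

lemma dspan_inverse:
  assumes "x \<in> dspan T"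
  shows "inverse x \<in> dspan T"
proof (cases "x = 0")
  case True
  then show ?thesis using dspan_if_word_rel[OF word_slot_zero_rel] by simp
next
  case False
  obtain Lx where Lx: "snd ` set Lx \<subseteq> T"
    and dx: "\<And>xs ys. (\<lambda>l. word (xs @ [x] @ ys) l - slot_comb Lx xs ys l) \<in> omega_rel"
    using assms unfolding dspan_def by blast
  show ?thesis
  proof (rule dspanI)
    show "snd ` set (scale_comb (- (inverse x ^ 2)) Lx) \<subseteq> T" using Lx by simp
    fix xs ys
    \<comment> \<open>Leibniz rule for \<open>x x\<^sup>-\<^sup>1 = 1\<close>, with \<open>d 1 = 0\<close>\<close>
    show "(\<lambda>l. word (xs @ [inverse x] @ ys) l - slot_comb (scale_comb (- (inverse x ^ 2)) Lx) xs ys l)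
        \<in> omega_rel"
      by (rule omega_rel_lincomb[where a="- inverse x" and b="inverse x" and c="- (inverse x ^ 2)",
            OF omega_rel.leibniz[of xs x "inverse x" ys] word_slot_one_rel[of xs ys] dx[of xs ys]])
        (use False in \<open>simp add: algebra_simps power2_eq_square\<close>)
  qed
qed

lemma Fp_subset_dspan: "Fp \<subseteq> dspan T"
proof
  fix z :: 'a assume "z \<in> Fp"
  then obtain x where z: "z = x ^ CHAR('a)" unfolding Fp_def by blast
  show "z \<in> dspan T"
  proof (cases "CHAR('a)")
    case 0
    then show ?thesis using z dspan_if_word_rel[OF word_slot_one_rel] by simp
  next
    case (Suc m)
    then have "of_nat (Suc m) = (0::'a)" using of_nat_CHAR[where 'a='a] by simp
    then show ?thesis using z Suc word_slot_power_rel[of _ x m] by (intro dspan_if_word_rel) simp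
  qed
qed

lemma is_subfield_dspan: "is_subfield (dspan T)"
  unfolding is_subfield_def
  by (simp add: dspan_if_word_rel[OF word_slot_zero_rel] dspan_if_word_rel[OF word_slot_one_rel]
      dspan_add dspan_diff dspan_mult dspan_inverse)

lemma Fp_adj_subset_dspan: "Fp_adj T \<subseteq> dspan T"
  unfolding Fp_adj_def gen_subfield_def
  by (intro Inter_lower) (simp add: is_subfield_dspan Fp_subset_dspan subset_dspan)

lemma subset_Fp_adj: "X \<subseteq> Fp_adj X"
  unfolding Fp_adj_def gen_subfield_def by blast

lemma wedge_word_eq_sum:
  assumes "finite P" "{l. f l \<noteq> 0} \<subseteq> P"
  shows "wedge_word f s l = (\<Sum>l0\<in>P. f l0 * word (l0 @ s) l)"
proof (cases "length s \<le> length l \<and> drop (length l - length s) l = s")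
  case True
  let ?t = "take (length l - length s) l"
  have "l = ?t @ s" using True by (metis append_take_drop_id)
  then have "word (l0 @ s) l = (if l0 = ?t then 1 else 0)" for l0
    unfolding word_def by (metis append_same_eq)
  then have "(\<Sum>l0\<in>P. f l0 * word (l0 @ s) l) = (\<Sum>l0\<in>P. if l0 = ?t then f l0 else 0)"
    by (intro sum.cong) auto
  also have "\<dots> = wedge_word f s l"
    using assms True unfolding wedge_word_def by auto
  finally show ?thesis by simp
next
  case False
  then have "l \<noteq> l0 @ s" for l0 by auto
  then show ?thesis using False by (auto simp: wedge_word_def word_def)
qed

lemma wedge_word_slot_comb_rel:
  assumes f: "finite {l. f l \<noteq> 0}"
    and dx: "\<And>xs ys. (\<lambda>l. word (xs @ [x] @ ys) l - slot_comb L xs ys l) \<in> omega_rel"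
  shows "(\<lambda>l. wedge_word f (xs @ [x] @ ys) l - (\<Sum>(c, t)\<leftarrow>L. c * wedge_word f (xs @ [t] @ ys) l))
           \<in> omega_rel"
proof -
  define P where "P = {l. f l \<noteq> 0}"
  have "finite P" using f unfolding P_def .
  then have wedge: "wedge_word f s l = (\<Sum>l0\<in>P. f l0 * word (l0 @ s) l)" for s l
    by (rule wedge_word_eq_sum) (simp add: P_def)
  have swap: "(\<Sum>(c, t)\<leftarrow>L. c * (\<Sum>l0\<in>P. f l0 * word (l0 @ xs @ t # ys) l))
      = (\<Sum>l0\<in>P. f l0 * slot_comb L (l0 @ xs) ys l)" for l
    by (induction L) (auto simp: slot_comb_def sum_distrib_left sum.distrib algebra_simps)
  have "(\<lambda>l. \<Sum>l0\<in>P. f l0 * (word ((l0 @ xs) @ [x] @ ys) l - slot_comb L (l0 @ xs) ys l))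
      \<in> omega_rel"
    using \<open>finite P\<close> by (rule omega_rel_sum) (rule omega_rel.smult[OF dx])
  then show ?thesis
    by (simp add: fun_eq_iff wedge swap sum_subtractf right_diff_distrib)
qed

lemma wedge_word_rel_if_dspan:
  assumes f: "finite {l. f l \<noteq> 0}" and x: "x \<in> dspan T"
    and T: "\<And>t. t \<in> T \<Longrightarrow> wedge_word f (xs @ [t] @ ys) \<in> omega_rel"
  shows "wedge_word f (xs @ [x] @ ys) \<in> omega_rel"
proof -
  obtain L where L: "snd ` set L \<subseteq> T"
    and dx: "\<And>xs ys. (\<lambda>l. word (xs @ [x] @ ys) l - slot_comb L xs ys l) \<in> omega_rel"
    using x unfolding dspan_def by blast
  have "(\<lambda>l. c * wedge_word f (xs @ [t] @ ys) l) \<in> omega_rel" if "(c, t) \<in> set L" for c t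
    using that L by (force intro!: omega_rel.smult T)
  then have "(\<lambda>l. \<Sum>(c, t)\<leftarrow>L. c * wedge_word f (xs @ [t] @ ys) l) \<in> omega_rel"
    using omega_rel_sum_list[of L "\<lambda>p l. case p of (c, t) \<Rightarrow> c * wedge_word f (xs @ [t] @ ys) l"]
    by force
  from omega_rel.add[OF wedge_word_slot_comb_rel[OF f dx, where xs=xs and ys=ys] this]
  show ?thesis by simp
qed

lemma ann_dwedge_antimono:
  assumes "\<forall>i<r. T i \<subseteq> Fp_adj (U i)"
  shows "ann n (dwedge r U) \<subseteq> ann n (dwedge r T)"
proof
  fix f assume "f \<in> ann n (dwedge r U)"
  then have f: "f \<in> omega_n n" and U: "\<And>u. u \<in> dwedge r U \<Longrightarrow> wedge_word f u \<in> omega_rel"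
    by (auto simp: ann_def)
  then have finite_support: "finite {l. f l \<noteq> 0}" by (simp add: omega_n_def)
  have replaced: "wedge_word f w \<in> omega_rel"
    if "m \<le> r" "length w = r" "\<forall>i<m. w ! i \<in> T i" "\<forall>i. m \<le> i \<and> i < r \<longrightarrow> w ! i \<in> U i"
    for m w
    using that
  proof (induction m arbitrary: w)
    case 0
    then show ?case using U by (auto simp: dwedge_def)
  next
    case (Suc m)
    then have m: "m < length w" by simp
    have "w ! m \<in> dspan (U m)"
      using assms Fp_adj_subset_dspan Suc.prems m by blast
    moreover have "wedge_word f (w[m := t]) \<in> omega_rel" if "t \<in> U m" for t
      using Suc.prems that by (intro Suc.IH) (auto simp: nth_list_update)
    ultimately have "wedge_word f (take m w @ [w ! m] @ drop (Suc m) w) \<in> omega_rel"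
      using wedge_word_rel_if_dspan[OF finite_support] m by (simp add: upd_conv_take_nth_drop)
    then show ?case
      by (simp add: id_take_nth_drop[OF m, symmetric])
  qed
  have "wedge_word f u \<in> omega_rel" if "u \<in> dwedge r T" for u
    using that by (intro replaced[of r]) (auto simp: dwedge_def)
  then show "f \<in> ann n (dwedge r T)"
    using f by (simp add: ann_def)
qed

lemma ann_dwedge_eq_if_Fp_adj_eq:
  assumes "\<forall>i<r. Fp_adj (S i) = Fp_adj (T i)"
  shows "ann n (dwedge r S) = ann n (dwedge r T)"
proof -
  have "\<forall>i<r. S i \<subseteq> Fp_adj (T i)" "\<forall>i<r. T i \<subseteq> Fp_adj (S i)"
    using assms subset_Fp_adj by blast+
  then show ?thesis by (intro equalityI ann_dwedge_antimono)
qed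

lemma dwedge_indexed:
  "dwedge r (\<lambda>i. {a i j | j. j < k i}) = {map (\<lambda>i. a i (J i)) [0..<r] | J. \<forall>i<r. J i < k i}"
proof (intro set_eqI iffI)
  fix u assume u: "u \<in> dwedge r (\<lambda>i. {a i j | j. j < k i})"
  then have "\<forall>i<r. \<exists>j. j < k i \<and> u ! i = a i j" by (auto simp: dwedge_def)
  then obtain J where "\<forall>i<r. J i < k i \<and> u ! i = a i (J i)" by metis
  moreover have "length u = r" using u by (simp add: dwedge_def)
  ultimately show "u \<in> {map (\<lambda>i. a i (J i)) [0..<r] | J. \<forall>i<r. J i < k i}"
    by (auto intro!: exI[of _ J] nth_equalityI)
qed (auto simp: dwedge_def)

theorem corollary3p3:
  fixes S :: "nat \<Rightarrow> 'a::field set" and k :: "nat \<Rightarrow> nat"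
    and a :: "nat \<Rightarrow> nat \<Rightarrow> 'a" and r n :: nat
  assumes "CHAR('a) > 0"
    and "\<forall>i<r. S i \<noteq> {}"
    and "\<forall>i<r. pdeg_is (S i) (k i)"
    and "\<forall>i<r. p_basis_of (Fp_adj (S i)) {a i j | j. j < k i}"
  shows "ann n (dwedge r S) = ann n (dwedge r (\<lambda>i. {a i j | j. j < k i}))
       \<and> ann n (dwedge r S) =
           {f \<in> omega_n n. \<forall>J. (\<forall>i<r. J i < k i) \<longrightarrow>
                f \<in> ann n {map (\<lambda>i. a i (J i)) [0..<r]}}"
proof -
  have "ann n (dwedge r S) = ann n (dwedge r (\<lambda>i. {a i j | j. j < k i}))"
    using assms(4) by (intro ann_dwedge_eq_if_Fp_adj_eq) (simp add: p_basis_of_def)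
  moreover have "ann n (dwedge r (\<lambda>i. {a i j | j. j < k i})) =
      {f \<in> omega_n n. \<forall>J. (\<forall>i<r. J i < k i) \<longrightarrow> f \<in> ann n {map (\<lambda>i. a i (J i)) [0..<r]}}"
    unfolding dwedge_indexed by (auto simp: ann_def)
  ultimately show ?thesis by simp
qed

end
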